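(* Let $G$ be the star on $k$ vertices and $n\ge 1$. Then $$W(\Gamma^G_n)=\frac{(k-1)^2(2k^2-2k-1)}{k^3(2k-1)}\,2^nk^{2n}-\frac{(k-1)(k-2)}{k^2}\,k^{2n}+\frac{(k-1)(k-2)}{k^2(2k-1)}\,k^n .$$
   Context: Let $G=(V,E)$ be a finite tree with vertex set $V$ of size $k$, and fix an orientation of each edge, so that each edge becomes an ordered pair $e=(s,t)$. Each oriented edge $e=(s,t)$ acts on the set $V^*$ of finite words over the alphabet $V$ by the recursive rule: $e(\emptyset)=\emptyset$, $e(sw)=t\,e(w)$, $e(tw)=sw$, and $e(xw)=xw$ for $x\in V\setminus\{s,t\}$ (words are read left to right, $w\in V^*$). This action preserves word length. For $n\ge 1$, the Schreier graph $\Gamma_n^G$ is the multigraph with vertex set $V^n$ having, for each $u\in V^n$ and each oriented edge $e$ of $G$, one edge joining $u$ and $e(u)$, labelled $e$ (a loop if $e(u)=u$). For a connected graph $H$, the Wiener index is $W(H)=\sum_{\{u,v\}}d_H(u,v)$ over unordered pairs of vertices. The star on $k$ vertices is the tree with one vertex adjacent to all $k-1$ others. *)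

theory Defs
  imports Main "HOL-Library.Library"
begin

fun edge_act :: "'a \<times> 'a \<Rightarrow> 'a list \<Rightarrow> 'a list" where
  "edge_act e [] = []"
| "edge_act (s, t) (x # w) =
     (if x = s then t # edge_act (s, t) w
      else if x = t then s # w
      else x # w)"

definition star_edges :: "'a set \<Rightarrow> 'a \<Rightarrow> 'a set set" where
  "star_edges V c = {{c, x} | x. x \<in> V - {c}}"

definition oriented_star :: "'a set \<Rightarrow> ('a \<times> 'a) set \<Rightarrow> bool" where
  "oriented_star V E \<longleftrightarrow>
     (\<exists>c \<in> V. bij_betw (\<lambda>(s, t). {s, t}) E (star_edges V c))"

definition words :: "'a set \<Rightarrow> nat \<Rightarrow> 'a list set" where
  "words V n = {w. length w = n \<and> set w \<subseteq> V}"

definition schreier_adj :: "'a set \<Rightarrow> ('a \<times> 'a) set \<Rightarrow> nat \<Rightarrow> ('a list \<times> 'a list) set" where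
  "schreier_adj V E n =
     {(u, v). u \<in> words V n \<and> v \<in> words V n \<and>
              (\<exists>e \<in> E. v = edge_act e u \<or> u = edge_act e v)}"

definition schreier_connected :: "'a set \<Rightarrow> ('a \<times> 'a) set \<Rightarrow> nat \<Rightarrow> bool" where
  "schreier_connected V E n \<longleftrightarrow>
     (\<forall>u \<in> words V n. \<forall>v \<in> words V n. (u, v) \<in> (schreier_adj V E n)\<^sup>*)"

definition schreier_dist :: "'a set \<Rightarrow> ('a \<times> 'a) set \<Rightarrow> nat \<Rightarrow> 'a list \<Rightarrow> 'a list \<Rightarrow> nat" where
  "schreier_dist V E n u v = (LEAST m. (u, v) \<in> (schreier_adj V E n) ^^ m)"

text \<open>Wiener index: sum of distances over unordered pairs = half the sum over ordered pairs.\<close>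
definition schreier_wiener :: "'a set \<Rightarrow> ('a \<times> 'a) set \<Rightarrow> nat \<Rightarrow> real" where
  "schreier_wiener V E n =
     (\<Sum>u \<in> words V n. \<Sum>v \<in> words V n. real (schreier_dist V E n u v)) / 2"

end

theory Submission
  imports Defs
begin

text \<open>Let \<open>c\<close> be the centre of the star and, for a leaf \<open>y\<close>, let \<open>\<sigma> y\<close> be the action of the
  edge \<open>(y, c)\<close>; the opposite orientation acts by the inverse map, so the Schreier graph joins
  every word \<open>w\<close> to \<open>\<sigma> y w\<close>. The only neighbours of a word \<open>y # w\<close> are \<open>c # w\<close> and
  \<open>c # \<sigma> y w\<close>, which gives, one level down, \<open>d(c # u, c # v) = 2 d(u, v)\<close>,
  \<open>d(y # w, c # v) = 1 + 2 min (d(w, v), d(\<sigma> y w, v))\<close>, and \<open>d(y # w, y' # w') = 2 + 2 m\<close>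
  where \<open>m\<close> is the least distance between \<open>{w, \<sigma> y w}\<close> and \<open>{w', \<sigma> y' w'}\<close>.
  The graph is bipartite (first letter \<open>c\<close> or not), so distances to the two ends of an edge
  differ by exactly one and each minimum is an average up to a correction. The only
  non-linear correction counts the edges crossing the cut between the words closer to one end
  of an edge than to the other; by induction on the length, every edge has exactly two such
  crossings. Summing over all pairs gives \<open>S (n + 1) = 2 k\<^sup>2 S n + 2 f n (k\<^sup>n\<^sup>+\<^sup>1 - 1)\<close> for
  the sum \<open>S n\<close> of all distances (twice the Wiener index), \<open>f n\<close> being the number of loops,
  and the closed form solves this recurrence.\<close>

section \<open>Distance in the graph of a relation\<close>

definition graph_dist :: "('b \<times> 'b) set \<Rightarrow> 'b \<Rightarrow> 'b \<Rightarrow> nat" where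
  "graph_dist R u v = (LEAST m. (u, v) \<in> R ^^ m)"

lemma graph_dist_le: "(u, v) \<in> R ^^ j \<Longrightarrow> graph_dist R u v \<le> j"
  unfolding graph_dist_def by (rule Least_le)

lemma relpow_graph_dist: "(u, v) \<in> R\<^sup>* \<Longrightarrow> (u, v) \<in> R ^^ graph_dist R u v"
  unfolding graph_dist_def by (metis LeastI rtrancl_imp_relpow)

lemma graph_dist_self [simp]: "graph_dist R u u = 0"
  using graph_dist_le[OF relpow_0_I] by simp

lemma graph_dist_pos: "(u, v) \<in> R\<^sup>* \<Longrightarrow> u \<noteq> v \<Longrightarrow> 0 < graph_dist R u v"
  using relpow_graph_dist[of u v R] by (cases "graph_dist R u v") auto

lemma graph_dist_step_le:
  "(u, v) \<in> R \<Longrightarrow> (v, w) \<in> R\<^sup>* \<Longrightarrow> graph_dist R u w \<le> Suc (graph_dist R v w)"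
  by (meson graph_dist_le relpow_graph_dist relpow_Suc_I2)

lemma graph_dist_first_step:
  assumes "(u, w) \<in> R\<^sup>*" "u \<noteq> w"
  obtains v where "(u, v) \<in> R" "(v, w) \<in> R\<^sup>*" "graph_dist R u w = Suc (graph_dist R v w)"
proof -
  obtain n where n: "graph_dist R u w = Suc n"
    using graph_dist_pos[OF assms] by (cases "graph_dist R u w") auto
  then obtain v where v: "(u, v) \<in> R" "(v, w) \<in> R ^^ n"
    using relpow_graph_dist[OF assms(1)] by (metis relpow_Suc_D2)
  have "(v, w) \<in> R\<^sup>*" using v(2) by (rule relpow_imp_rtrancl)
  with v n graph_dist_le[OF v(2)] graph_dist_step_le[OF v(1)] show thesis
    by (intro that[of v]) force+
qed

lemma graph_dist_lower_bound:
  assumes step: "\<And>a b. (a, b) \<in> R \<Longrightarrow> F a \<le> F b + (1::nat)" and "(u, v) \<in> R\<^sup>*"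
  shows "F u \<le> F v + graph_dist R u v"
proof -
  have "F x \<le> F v + j" if "(x, v) \<in> R ^^ j" for x j
    using that
  proof (induction j arbitrary: x)
    case (Suc j)
    then obtain y where "(x, y) \<in> R" "(y, v) \<in> R ^^ j" by (metis relpow_Suc_D2)
    with Suc.IH step[of x y] show ?case by fastforce
  qed simp
  then show ?thesis using relpow_graph_dist[OF assms(2)] .
qed

lemma even_graph_dist_iff:
  assumes flip: "\<And>a b. (a, b) \<in> R \<Longrightarrow> a \<noteq> b \<Longrightarrow> P a \<noteq> P b"
  shows "(u, w) \<in> R\<^sup>* \<Longrightarrow> even (graph_dist R u w) \<longleftrightarrow> (P u \<longleftrightarrow> P w)"
proof (induction "graph_dist R u w" arbitrary: u)
  case 0
  then have "(u, w) \<in> R ^^ 0" by (metis relpow_graph_dist)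
  then show ?case using 0 by simp
next
  case (Suc x)
  then have "u \<noteq> w" by (metis graph_dist_self nat.distinct(1))
  then obtain v where v: "(u, v) \<in> R" "(v, w) \<in> R\<^sup>*" "graph_dist R u w = Suc (graph_dist R v w)"
    using graph_dist_first_step Suc.prems by metis
  then have "u \<noteq> v" by auto
  with flip v(1) have "P u \<noteq> P v" by blast
  with Suc v show ?case by auto
qed

lemma sym_relpow: "sym R \<Longrightarrow> (u, v) \<in> R ^^ j \<Longrightarrow> (v, u) \<in> R ^^ j"
proof (induction j arbitrary: v)
  case (Suc j)
  then obtain y where "(u, y) \<in> R ^^ j" "(y, v) \<in> R" by (meson relpow_Suc_E)
  with Suc show ?case by (meson relpow_Suc_I2 symD)
qed simp

lemma graph_dist_commute: "sym R \<Longrightarrow> graph_dist R u v = graph_dist R v u"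
  unfolding graph_dist_def by (metis sym_relpow)

section \<open>Words and the action of edges\<close>

lemma length_edge_act [simp]: "length (edge_act e w) = length w"
  by (induction e w rule: edge_act.induct) auto

lemma set_edge_act: "set (edge_act (s, t) w) \<subseteq> insert s (insert t (set w))"
  by (induction "(s, t)" w rule: edge_act.induct) auto

lemma edge_act_inverse [simp]: "edge_act (s, t) (edge_act (t, s) w) = w"
  by (induction "(t, s)" w rule: edge_act.induct) auto

lemma edge_act_same [simp]: "edge_act (s, s) w = w"
  by (induction w) auto

lemma words_0: "words V 0 = {[]}"
  unfolding words_def by auto

lemma Cons_in_words_iff [simp]: "a # w \<in> words V (Suc m) \<longleftrightarrow> a \<in> V \<and> w \<in> words V m"
  unfolding words_def by auto

lemma words_SucE:
  assumes "z \<in> words V (Suc m)"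
  obtains a w where "z = a # w" "a \<in> V" "w \<in> words V m"
  using assms unfolding words_def by (cases z) auto

lemma finite_words: "finite V \<Longrightarrow> finite (words V m)"
  unfolding words_def using finite_lists_length_eq by (simp add: conj_commute)

lemma card_words: "finite V \<Longrightarrow> card (words V m) = card V ^ m"
  unfolding words_def using card_lists_length_eq by (simp add: conj_commute)

lemma sum_words_Suc:
  "(\<Sum>z\<in>words V (Suc m). f z) = (\<Sum>a\<in>V. \<Sum>w\<in>words V m. f (a # w))"
proof -
  have inj: "inj_on (\<lambda>(a, w). a # w) (V \<times> words V m)"
    by (auto simp: inj_on_def)
  have "words V (Suc m) = (\<lambda>(a, w). a # w) ` (V \<times> words V m)"
    by (auto simp: image_iff elim: words_SucE)
  then have "(\<Sum>z\<in>words V (Suc m). f z) = (\<Sum>p\<in>V \<times> words V m. f ((\<lambda>(a, w). a # w) p))"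
    using inj by (simp add: sum.reindex)
  then show ?thesis
    by (simp add: sum.cartesian_product case_prod_beta')
qed

lemma edge_act_in_words: "s \<in> V \<Longrightarrow> t \<in> V \<Longrightarrow> w \<in> words V m \<Longrightarrow> edge_act (s, t) w \<in> words V m"
  unfolding words_def using set_edge_act[of s t w] by auto

section \<open>Arithmetic of minima and the closed form\<close>

lemma min_cong_doubleton:
  fixes f :: "'b \<Rightarrow> 'c::linorder"
  shows "{a, b} = {a', b'} \<Longrightarrow> min (f a) (f b) = min (f a') (f b')"
  unfolding doubleton_eq_iff by (auto simp: min.commute)

lemma min_le_min_iff_less:
  fixes a b a' b' :: nat
  assumes "a' = Suc a \<or> a = Suc a'" "b' = Suc b \<or> b = Suc b'"
    and "a \<le> Suc b" "b \<le> Suc a" "a' \<le> Suc b'" "b' \<le> Suc a'"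
  shows "min a b \<le> min a' b' \<longleftrightarrow> a < a' \<or> b < b'"
  using assms by (auto simp: min_def)

text \<open>In the application, \<open>a, b, a', b'\<close> are the distances between the ends of two edges of a
  bipartite graph, \<open>p\<close> and \<open>q\<close> saying that these edges are not loops.\<close>
lemma four_min_eq:
  fixes a b a' b' :: nat
  assumes "p \<Longrightarrow> a' = Suc a \<or> a = Suc a'" "\<not> p \<Longrightarrow> a' = a"
    and "p \<Longrightarrow> b' = Suc b \<or> b = Suc b'" "\<not> p \<Longrightarrow> b' = b"
    and "q \<Longrightarrow> b = Suc a \<or> a = Suc b" "\<not> q \<Longrightarrow> b = a"
    and "q \<Longrightarrow> b' = Suc a' \<or> a' = Suc b'" "\<not> q \<Longrightarrow> b' = a'"
  shows "4 * int (min (min a b) (min a' b')) = int a + int b + int a' + int b'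
    - 2 * of_bool p - 2 * of_bool q + 2 * of_bool ((a < a') \<noteq> (b < b'))"
  using assms by (cases p; cases q) (auto simp: min_def)

definition star_wiener :: "real \<Rightarrow> nat \<Rightarrow> real" where
  "star_wiener K n =
     ((K - 1)^2 * (2 * K^2 - 2 * K - 1) / (K^3 * (2 * K - 1))) * 2^n * K^(2*n)
     - ((K - 1) * (K - 2) / K^2) * K^(2*n)
     + ((K - 1) * (K - 2) / (K^2 * (2 * K - 1))) * K^n"

lemma star_wiener_recurrence:
  assumes "K \<ge> 1"
  shows "star_wiener K 1 = (K - 1)^2"
    and "star_wiener K (Suc (Suc j)) =
      2 * K^2 * star_wiener K (Suc j) + (K - 1) * (K - 2) * (K^(2 * Suc j) - K^j)"
proof -
  have K: "K \<noteq> 0" "2 * K - 1 \<noteq> 0" using assms by auto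
  define a b c where "a = (K - 1)^2 * (2 * K^2 - 2 * K - 1) / (K^3 * (2 * K - 1))"
    and "b = (K - 1) * (K - 2) / K^2" and "c = (K - 1) * (K - 2) / (K^2 * (2 * K - 1))"
  have sw: "star_wiener K n = a * (2 * K^2)^n - b * K^(2*n) + c * K^n" for n
    unfolding star_wiener_def a_def b_def c_def by (simp add: power_mult_distrib power_mult)
  have a: "a * K^3 * (2 * K - 1) = (K - 1)^2 * (2 * K^2 - 2 * K - 1)"
    using K unfolding a_def by simp
  have b: "b * K^2 = (K - 1) * (K - 2)"
    using K unfolding b_def by simp
  have c: "c * K^2 * (2 * K - 1) = (K - 1) * (K - 2)"
    using K unfolding c_def by simp
  show "star_wiener K 1 = (K - 1)^2"
    unfolding sw power_one_right mult_1_right using a b c K by algebra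
  have step: "a * (2 * K^2 * P) - b * (K^2 * Y) + c * (K * (K * X)) =
      2 * K^2 * (a * P - b * Y + c * (K * X)) + (K - 1) * (K - 2) * (Y - X)" for P Y X
    using b c by algebra
  have pow: "(2 * K^2)^Suc (Suc j) = 2 * K^2 * (2 * K^2)^Suc j"
    "K^(2 * Suc (Suc j)) = K^2 * K^(2 * Suc j)" "K^Suc (Suc j) = K * K^Suc j" "K^Suc j = K * K^j"
    by (simp_all add: power2_eq_square)
  show "star_wiener K (Suc (Suc j)) =
      2 * K^2 * star_wiener K (Suc j) + (K - 1) * (K - 2) * (K^(2 * Suc j) - K^j)"
    unfolding sw pow by (rule step)
qed

section \<open>Schreier graphs of a star\<close>

declare edge_act.simps(2) [simp del]

locale star_schreier =
  fixes V :: "'a set" and E :: "('a \<times> 'a) set" and c :: 'a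
  assumes finite_V: "finite V" and centre: "c \<in> V"
    and edge_at_centre: "e \<in> E \<Longrightarrow> \<exists>y \<in> V - {c}. e = (c, y) \<or> e = (y, c)"
    and leaf_edge: "y \<in> V - {c} \<Longrightarrow> (c, y) \<in> E \<or> (y, c) \<in> E"
begin

abbreviation "L \<equiv> V - {c}"
abbreviation "W m \<equiv> words V m"
abbreviation "R m \<equiv> schreier_adj V E m"
abbreviation "D m \<equiv> schreier_dist V E m"
abbreviation "\<sigma> y \<equiv> edge_act (y, c)"

lemma D_eq_graph_dist: "D m = graph_dist (R m)"
  unfolding schreier_dist_def graph_dist_def by (rule ext)+ (rule refl)

lemma finite_L: "finite L"
  using finite_V by simp

lemma finite_W: "finite (W m)"
  using finite_V by (rule finite_words)

lemma \<sigma>_in_W: "y \<in> V \<Longrightarrow> w \<in> W m \<Longrightarrow> \<sigma> y w \<in> W m"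
  by (rule edge_act_in_words[OF _ centre])

lemma \<sigma>_centre [simp]: "\<sigma> y (c # w) = y # w"
  by (cases "y = c") (simp_all add: edge_act.simps)

lemma \<sigma>_leaf [simp]: "y \<noteq> c \<Longrightarrow> \<sigma> y (y # w) = c # \<sigma> y w"
  by (simp add: edge_act.simps)

lemma \<sigma>_other [simp]: "a \<noteq> y \<Longrightarrow> a \<noteq> c \<Longrightarrow> \<sigma> y (a # w) = a # w"
  by (simp add: edge_act.simps)

lemma sum_\<sigma>_reindex: "y \<in> V \<Longrightarrow> (\<Sum>w\<in>W m. f (\<sigma> y w)) = (\<Sum>w\<in>W m. f w)"
  by (rule sum.reindex_bij_betw, rule bij_betwI[where g = "edge_act (c, y)"])
     (auto intro: \<sigma>_in_W edge_act_in_words centre)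

text \<open>The orientation of the edges is irrelevant, as \<open>edge_act (c, y)\<close> inverts \<open>\<sigma> y\<close>.\<close>
lemma adj_iff:
  "(u, u') \<in> R m \<longleftrightarrow> u \<in> W m \<and> u' \<in> W m \<and> (\<exists>y\<in>L. u' = \<sigma> y u \<or> u = \<sigma> y u')"
proof
  assume "(u, u') \<in> R m"
  then obtain e where e: "e \<in> E" "u' = edge_act e u \<or> u = edge_act e u'" and "u \<in> W m" "u' \<in> W m"
    unfolding schreier_adj_def by auto
  moreover obtain y where "y \<in> L" "e = (c, y) \<or> e = (y, c)"
    using edge_at_centre[OF e(1)] by blast
  moreover from this(2) e(2) have "u' = \<sigma> y u \<or> u = \<sigma> y u'"
    by auto
  ultimately show "u \<in> W m \<and> u' \<in> W m \<and> (\<exists>y\<in>L. u' = \<sigma> y u \<or> u = \<sigma> y u')"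
    by blast
next
  assume "u \<in> W m \<and> u' \<in> W m \<and> (\<exists>y\<in>L. u' = \<sigma> y u \<or> u = \<sigma> y u')"
  then obtain y where "y \<in> L" and dir: "u' = \<sigma> y u \<or> u = \<sigma> y u'" and "u \<in> W m" "u' \<in> W m"
    by blast
  moreover have "\<exists>e\<in>E. u' = edge_act e u \<or> u = edge_act e u'"
    using leaf_edge[OF \<open>y \<in> L\<close>] dir by (metis edge_act_inverse)
  ultimately show "(u, u') \<in> R m"
    unfolding schreier_adj_def by blast
qed

lemma sym_adj: "sym (R m)"
  unfolding schreier_adj_def sym_def by blast

lemma adj_\<sigma>: "y \<in> L \<Longrightarrow> w \<in> W m \<Longrightarrow> (w, \<sigma> y w) \<in> R m"
  using adj_iff \<sigma>_in_W by auto

lemma adj_\<sigma>': "y \<in> L \<Longrightarrow> w \<in> W m \<Longrightarrow> (\<sigma> y w, w) \<in> R m"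
  using adj_\<sigma> sym_adj by (meson symD)

lemma adj_in_W: "(u, u') \<in> R m \<Longrightarrow> u \<in> W m \<and> u' \<in> W m"
  using adj_iff by blast

lemma adj_SucE:
  assumes "(z, z') \<in> R (Suc m)" "z \<noteq> z'"
  obtains y w where "y \<in> L" "w \<in> W m"
    "(z, z') \<in> {(c # w, y # w), (y # w, c # w), (y # w, c # \<sigma> y w), (c # \<sigma> y w, y # w)}"
proof -
  from assms(1) obtain y where y: "y \<in> L" and dir: "z' = \<sigma> y z \<or> z = \<sigma> y z'"
    and "z \<in> W (Suc m)" "z' \<in> W (Suc m)"
    using adj_iff by blast
  then obtain a w a' w' where z: "z = a # w" "w \<in> W m" and z': "z' = a' # w'" "w' \<in> W m"
    by (metis words_SucE)
  from dir show thesis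
  proof
    assume "z' = \<sigma> y z"
    with z assms(2) show thesis
      by (cases "a = c"; cases "a = y") (auto intro: that[OF y z(2)])
  next
    assume "z = \<sigma> y z'"
    with z' assms(2) show thesis
      by (cases "a' = c"; cases "a' = y") (auto intro: that[OF y z'(2)])
  qed
qed

lemma adj_leaf_neighbours:
  assumes "(y # w, z) \<in> R (Suc m)" "y \<in> L"
  shows "z \<in> {y # w, c # w, c # \<sigma> y w}"
proof (cases "z = y # w")
  case False
  with assms obtain y' w' where "y' \<in> L"
    "(y # w, z) \<in> {(c # w', y' # w'), (y' # w', c # w'), (y' # w', c # \<sigma> y' w'), (c # \<sigma> y' w', y' # w')}"
    by (metis adj_SucE)
  with assms(2) show ?thesis
    by auto
qed simp

lemma centre_adj_lift:
  assumes "(x, v) \<in> R m"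
  shows "(c # x, c # v) \<in> (R (Suc m)) ^^ 2"
proof -
  from assms obtain y where y: "y \<in> L" and dir: "v = \<sigma> y x \<or> x = \<sigma> y v"
    and W: "x \<in> W m" "v \<in> W m"
    using adj_iff by blast
  have "\<exists>z. (c # x, z) \<in> R (Suc m) \<and> (z, c # v) \<in> R (Suc m)"
    using dir
  proof
    assume "v = \<sigma> y x"
    then show ?thesis
      using adj_\<sigma>[OF y, of "c # x" "Suc m"] adj_\<sigma>[OF y, of "y # x" "Suc m"] y W centre by auto
  next
    assume "x = \<sigma> y v"
    then show ?thesis
      using adj_\<sigma>'[OF y, of "y # v" "Suc m"] adj_\<sigma>'[OF y, of "c # v" "Suc m"] y W centre by auto
  qed
  then show ?thesis
    by (auto simp: numeral_2_eq_2 intro: relpow_Suc_I2)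
qed

lemma centre_path_lift:
  "(u, v) \<in> (R m) ^^ j \<Longrightarrow> (c # u, c # v) \<in> (R (Suc m)) ^^ (2 * j)"
proof (induction j arbitrary: v)
  case (Suc j)
  then obtain x where "(u, x) \<in> (R m) ^^ j" "(x, v) \<in> R m"
    by (meson relpow_Suc_E)
  with Suc.IH have "(c # u, c # v) \<in> (R (Suc m)) ^^ (2 * j + 2)"
    by (meson centre_adj_lift relpow_trans)
  then show ?case
    by (simp add: algebra_simps)
qed simp

lemma adj_connected: "u \<in> W m \<Longrightarrow> v \<in> W m \<Longrightarrow> (u, v) \<in> (R m)\<^sup>*"
proof (induction m arbitrary: u v)
  case 0
  then show ?case by (simp add: words_0)
next
  case (Suc m)
  have to_centre: "(a # w, c # w) \<in> (R (Suc m))\<^sup>*" if "a \<in> V" "w \<in> W m" for a w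
    using adj_\<sigma>'[of a "c # w" "Suc m"] that centre by (cases "a = c") auto
  obtain a w b w' where u: "u = a # w" "a \<in> V" "w \<in> W m" and v: "v = b # w'" "b \<in> V" "w' \<in> W m"
    using Suc.prems by (metis words_SucE)
  obtain j where "(w, w') \<in> (R m) ^^ j"
    using Suc.IH[OF u(3) v(3)] by (metis rtrancl_imp_relpow)
  then have "(c # w, c # w') \<in> (R (Suc m))\<^sup>*"
    by (meson centre_path_lift relpow_imp_rtrancl)
  moreover have "(c # w', b # w') \<in> (R (Suc m))\<^sup>*"
    using to_centre[OF v(2,3)] sym_adj by (metis sym_conv_converse_eq rtrancl_converseI)
  ultimately show ?case
    using to_centre[OF u(2,3)] u(1) v(1) by (meson rtrancl_trans)
qed

lemma D_le: "(u, v) \<in> (R m) ^^ j \<Longrightarrow> D m u v \<le> j"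
  unfolding D_eq_graph_dist by (rule graph_dist_le)

lemma D_commute: "D m u v = D m v u"
  unfolding D_eq_graph_dist using sym_adj by (rule graph_dist_commute)

lemma D_self [simp]: "D m u u = 0"
  unfolding D_eq_graph_dist by simp

lemma D_pos: "u \<in> W m \<Longrightarrow> v \<in> W m \<Longrightarrow> u \<noteq> v \<Longrightarrow> 0 < D m u v"
  unfolding D_eq_graph_dist by (rule graph_dist_pos) (auto intro: adj_connected)

lemma D_step_le: "(u, u') \<in> R m \<Longrightarrow> v \<in> W m \<Longrightarrow> D m u v \<le> Suc (D m u' v)"
  unfolding D_eq_graph_dist by (rule graph_dist_step_le) (auto intro: adj_connected dest: adj_in_W)

lemma D_\<sigma>_le:
  assumes "y \<in> L" "w \<in> W m" "v \<in> W m"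
  shows "D m w v \<le> Suc (D m (\<sigma> y w) v)" "D m (\<sigma> y w) v \<le> Suc (D m w v)"
  using D_step_le[OF adj_\<sigma>[OF assms(1,2)]] D_step_le[OF adj_\<sigma>'[OF assms(1,2)]] assms(3) by auto

lemma D_centre_centre:
  assumes u: "u \<in> W m" and v: "v \<in> W m"
  shows "D (Suc m) (c # u) (c # v) = 2 * D m u v"
proof (rule antisym)
  have "(u, v) \<in> (R m) ^^ D m u v"
    unfolding D_eq_graph_dist by (rule relpow_graph_dist) (rule adj_connected[OF u v])
  then show "D (Suc m) (c # u) (c # v) \<le> 2 * D m u v"
    by (meson centre_path_lift D_le)
next
  txt \<open>A leaf word \<open>y # w\<close> sits halfway between its neighbours \<open>c # w\<close> and \<open>c # \<sigma> y w\<close>.\<close>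
  define F where "F z = (if hd z = c then 2 * D m (tl z) v else D m (tl z) v + D m (\<sigma> (hd z) (tl z)) v)"
    for z
  have "F a \<le> F b + 1" if "(a, b) \<in> R (Suc m)" for a b
  proof (cases "a = b")
    case False
    with that obtain y w where "y \<in> L" "w \<in> W m"
      "(a, b) \<in> {(c # w, y # w), (y # w, c # w), (y # w, c # \<sigma> y w), (c # \<sigma> y w, y # w)}"
      by (rule adj_SucE)
    with D_\<sigma>_le[of y w m v] v show ?thesis
      unfolding F_def by auto
  qed simp
  moreover have "(c # u, c # v) \<in> (R (Suc m))\<^sup>*"
    using u v centre by (simp add: adj_connected)
  ultimately have "F (c # u) \<le> F (c # v) + D (Suc m) (c # u) (c # v)"
    unfolding D_eq_graph_dist by (rule graph_dist_lower_bound)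
  then show "2 * D m u v \<le> D (Suc m) (c # u) (c # v)"
    unfolding F_def by simp
qed

lemma D_leaf:
  assumes y: "y \<in> L" and w: "w \<in> W m" and z: "z \<in> W (Suc m)" "z \<noteq> y # w"
  shows "D (Suc m) (y # w) z = Suc (min (D (Suc m) (c # w) z) (D (Suc m) (c # \<sigma> y w) z))"
proof (rule antisym)
  show "D (Suc m) (y # w) z \<le> Suc (min (D (Suc m) (c # w) z) (D (Suc m) (c # \<sigma> y w) z))"
    using D_step_le[OF adj_\<sigma>'[OF y, of "c # w"] z(1)] D_step_le[OF adj_\<sigma>[OF y, of "y # w"] z(1)]
      y w centre by simp
next
  have "(y # w, z) \<in> (R (Suc m))\<^sup>*"
    using adj_connected y w z by simp
  then obtain x where x: "(y # w, x) \<in> R (Suc m)" "D (Suc m) (y # w) z = Suc (D (Suc m) x z)"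
    unfolding D_eq_graph_dist using z(2) by (metis graph_dist_first_step)
  then have "x \<noteq> y # w"
    by auto
  with adj_leaf_neighbours[OF x(1) y] have "x = c # w \<or> x = c # \<sigma> y w"
    by auto
  with x(2) show "Suc (min (D (Suc m) (c # w) z) (D (Suc m) (c # \<sigma> y w) z)) \<le> D (Suc m) (y # w) z"
    by auto
qed

lemma D_leaf_centre:
  assumes y: "y \<in> L" and w: "w \<in> W m" and v: "v \<in> W m"
  shows "D (Suc m) (y # w) (c # v) = Suc (2 * min (D m w v) (D m (\<sigma> y w) v))"
  using D_leaf[OF y w, of "c # v"] D_centre_centre[OF w v] D_centre_centre[OF \<sigma>_in_W v]
    y w v centre by auto

lemma D_leaf_leaf:
  assumes y: "y \<in> L" and w: "w \<in> W m" and y': "y' \<in> L" and w': "w' \<in> W m"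
    and ne: "y # w \<noteq> y' # w'"
  shows "D (Suc m) (y # w) (y' # w') = Suc (Suc (2 * min
    (min (D m w w') (D m w (\<sigma> y' w'))) (min (D m (\<sigma> y w) w') (D m (\<sigma> y w) (\<sigma> y' w')))))"
proof -
  have "D (Suc m) (c # x) (y' # w') = Suc (2 * min (D m x w') (D m x (\<sigma> y' w')))" if "x \<in> W m" for x
    using D_leaf_centre[OF y' w' that] D_commute by (metis min.commute)
  moreover have "y' # w' \<in> W (Suc m)"
    using y' w' by simp
  ultimately show ?thesis
    using D_leaf[OF y w _ ne[symmetric]] \<sigma>_in_W[of y w m] y w by (simp add: nat_mult_min_right)
qed

lemma adj_moves_centre: "(a, b) \<in> R m \<Longrightarrow> a \<noteq> b \<Longrightarrow> hd a = c \<longleftrightarrow> hd b \<noteq> c"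
proof (cases m)
  case 0
  then show "(a, b) \<in> R m \<Longrightarrow> a \<noteq> b \<Longrightarrow> ?thesis"
    by (auto dest: adj_in_W simp: words_0)
next
  case (Suc m')
  then show "(a, b) \<in> R m \<Longrightarrow> a \<noteq> b \<Longrightarrow> ?thesis"
    by (auto elim: adj_SucE)
qed

text \<open>The Schreier graph is bipartite, the sides being the words with first letter \<open>c\<close> and the
  others.\<close>
lemma D_adj:
  assumes "(u, u') \<in> R m" "u \<noteq> u'" "v \<in> W m"
  shows "D m u' v = Suc (D m u v) \<or> D m u v = Suc (D m u' v)"
proof -
  have parity: "even (D m x v) \<longleftrightarrow> (hd x = c \<longleftrightarrow> hd v = c)" if "x \<in> W m" for x
    unfolding D_eq_graph_dist
    by (rule even_graph_dist_iff) (use adj_moves_centre adj_connected that assms(3) in auto)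
  have "hd u = c \<longleftrightarrow> hd u' \<noteq> c"
    using adj_moves_centre assms(1,2) .
  with parity[of u] parity[of u'] adj_in_W[OF assms(1)]
  have "even (D m u v) \<longleftrightarrow> odd (D m u' v)"
    by blast
  moreover have "(u', u) \<in> R m"
    using assms(1) sym_adj by (meson symD)
  ultimately show ?thesis
    using D_step_le[OF assms(1,3)] D_step_le[OF _ assms(3), of u' u] by presburger
qed

lemma D_\<sigma>:
  "y \<in> L \<Longrightarrow> w \<in> W m \<Longrightarrow> \<sigma> y w \<noteq> w \<Longrightarrow> v \<in> W m \<Longrightarrow>
    D m (\<sigma> y w) v = Suc (D m w v) \<or> D m w v = Suc (D m (\<sigma> y w) v)"
  using D_adj[OF adj_\<sigma>, of y w m v] by auto

lemma D_leaf_centre_eq: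
  assumes y: "y \<in> L" and w: "w \<in> W m" and v: "v \<in> W m"
  shows "int (D (Suc m) (y # w) (c # v)) = int (D m w v) + int (D m (\<sigma> y w) v) + of_bool (\<sigma> y w = w)"
  using D_leaf_centre[OF assms] D_\<sigma>[OF y w _ v] by (cases "\<sigma> y w = w") auto

section \<open>Crossing edges\<close>

lemma sum_W_Suc:
  "(\<Sum>z\<in>W (Suc m). g z) = (\<Sum>w\<in>W m. g (c # w)) + (\<Sum>y\<in>L. \<Sum>w\<in>W m. g (y # w))"
  unfolding sum_words_Suc sum.remove[OF finite_V centre] ..

lemma sum_\<sigma>_Suc:
  assumes y: "y \<in> L" and f0: "\<And>z. f z z = 0"
  shows "(\<Sum>z\<in>W (Suc m). f z (\<sigma> y z)) = (\<Sum>w\<in>W m. f (c # w) (y # w) + f (y # w) (c # \<sigma> y w))"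
proof -
  have "(\<Sum>a\<in>L. \<Sum>w\<in>W m. f (a # w) (\<sigma> y (a # w))) = (\<Sum>w\<in>W m. f (y # w) (c # \<sigma> y w))"
    using y by (subst sum.remove[OF finite_L y]) (simp add: f0)
  then show ?thesis
    unfolding sum_W_Suc using y by (simp add: sum.distrib)
qed

definition closer :: "nat \<Rightarrow> 'a list \<Rightarrow> 'a list \<Rightarrow> 'a list \<Rightarrow> bool" where
  "closer m u u' z \<longleftrightarrow> D m u z < D m u' z"

definition crossings :: "nat \<Rightarrow> 'a list \<Rightarrow> 'a list \<Rightarrow> nat" where
  "crossings m u u' = (\<Sum>y\<in>L. \<Sum>w\<in>W m. of_bool (closer m u u' w \<noteq> closer m u u' (\<sigma> y w)))"

lemma crossings_commute:
  assumes "(u, u') \<in> R m" "u \<noteq> u'"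
  shows "crossings m u u' = crossings m u' u"
proof -
  have "closer m u' u x \<longleftrightarrow> \<not> closer m u u' x" if "x \<in> W m" for x
    using D_adj[OF assms that] unfolding closer_def by auto
  then show ?thesis
    unfolding crossings_def by (intro sum.cong refl) (auto simp: \<sigma>_in_W)
qed

lemma crossings_Suc:
  "crossings (Suc m) p q = (\<Sum>y\<in>L. \<Sum>w\<in>W m.
     of_bool (closer (Suc m) p q (c # w) \<noteq> closer (Suc m) p q (y # w)) +
     of_bool (closer (Suc m) p q (y # w) \<noteq> closer (Suc m) p q (c # \<sigma> y w)))"
  unfolding crossings_def by (intro sum.cong refl sum_\<sigma>_Suc) auto

text \<open>Below, \<open>c # u\<close> is one of the neighbours \<open>c # v0\<close>, \<open>c # \<sigma> y0 v0\<close> of the leaf word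
  \<open>y0 # v0\<close>, and \<open>u2\<close> is the other end of the edge (or loop) from \<open>v0\<close> to \<open>\<sigma> y0 v0\<close>.\<close>
context
  fixes y0 v0 u u2 m
  assumes y0: "y0 \<in> L" and v0: "v0 \<in> W m" and u: "{u, u2} = {v0, \<sigma> y0 v0}"
begin

lemma doubleton_in_W: "u \<in> W m" "u2 \<in> W m"
  using u v0 \<sigma>_in_W[OF _ v0, of y0] y0 by (auto simp: doubleton_eq_iff)

lemma closer_centre:
  assumes x: "x \<in> W m"
  shows "closer (Suc m) (c # u) (y0 # v0) (c # x) \<longleftrightarrow> D m u x \<le> D m u2 x"
proof -
  have "D (Suc m) (y0 # v0) (c # x) = Suc (2 * min (D m u x) (D m u2 x))"
    using D_leaf_centre[OF y0 v0 x] min_cong_doubleton[OF u, of "\<lambda>v. D m v x"] by simp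
  then show ?thesis
    unfolding closer_def using D_centre_centre[OF doubleton_in_W(1) x] by auto
qed

lemma closer_leaf:
  assumes y: "y \<in> L" and w: "w \<in> W m" and ne: "y # w \<noteq> y0 # v0"
  shows "closer (Suc m) (c # u) (y0 # v0) (y # w) \<longleftrightarrow>
    min (D m u w) (D m u (\<sigma> y w)) \<le> min (D m u2 w) (D m u2 (\<sigma> y w))"
proof -
  have "D (Suc m) (c # u) (y # w) = Suc (2 * min (D m u w) (D m u (\<sigma> y w)))"
    using D_leaf_centre[OF y w doubleton_in_W(1)] by (simp add: D_commute)
  moreover have "D (Suc m) (y0 # v0) (y # w) =
      Suc (Suc (2 * min (min (D m u w) (D m u (\<sigma> y w))) (min (D m u2 w) (D m u2 (\<sigma> y w)))))"
    using D_leaf_leaf[OF y0 v0 y w ne[symmetric]]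
      min_cong_doubleton[OF u, of "\<lambda>v. min (D m v w) (D m v (\<sigma> y w))"] by simp
  ultimately show ?thesis
    unfolding closer_def by auto
qed

lemma doubleton_adj: "(u, u2) \<in> R m"
  using u adj_\<sigma>[OF y0 v0] adj_\<sigma>'[OF y0 v0] by (auto simp: doubleton_eq_iff)

lemma closer_centre_edge:
  assumes "u \<noteq> u2" "x \<in> W m"
  shows "closer (Suc m) (c # u) (y0 # v0) (c # x) \<longleftrightarrow> closer m u u2 x"
  using closer_centre[OF assms(2)] D_adj[OF doubleton_adj assms] unfolding closer_def by auto

lemma closer_leaf_edge:
  assumes ne: "u \<noteq> u2" and y: "y \<in> L" and w: "w \<in> W m" and "y # w \<noteq> y0 # v0"
  shows "closer (Suc m) (c # u) (y0 # v0) (y # w) \<longleftrightarrow> closer m u u2 w \<or> closer m u u2 (\<sigma> y w)"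
proof -
  have \<sigma>w: "\<sigma> y w \<in> W m"
    using y w by (simp add: \<sigma>_in_W)
  have "min (D m u w) (D m u (\<sigma> y w)) \<le> min (D m u2 w) (D m u2 (\<sigma> y w)) \<longleftrightarrow>
      D m u w < D m u2 w \<or> D m u (\<sigma> y w) < D m u2 (\<sigma> y w)"
    using D_adj[OF doubleton_adj ne w] D_adj[OF doubleton_adj ne \<sigma>w] y
      D_\<sigma>_le[OF y w doubleton_in_W(1)] D_\<sigma>_le[OF y w doubleton_in_W(2)]
    by (intro min_le_min_iff_less) (auto simp: D_commute)
  then show ?thesis
    using closer_leaf[OF y w assms(4)] unfolding closer_def by simp
qed

lemma not_closer_self: "\<not> closer (Suc m) (c # u) (y0 # v0) (y0 # v0)"
  unfolding closer_def by simp

end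

lemma crossings_centre_leaf_loop:
  assumes y0: "y0 \<in> L" and v0: "v0 \<in> W m" and loop: "\<sigma> y0 v0 = v0"
  shows "crossings (Suc m) (c # v0) (y0 # v0) = 2"
proof -
  have u: "{v0, v0} = {v0, \<sigma> y0 v0}"
    using loop by simp
  note closer_centre[OF y0 v0 u] closer_leaf[OF y0 v0 u] not_closer_self[OF y0 v0 u]
  then have "of_bool (closer (Suc m) (c # v0) (y0 # v0) (c # w) \<noteq> closer (Suc m) (c # v0) (y0 # v0) (y # w)) +
      of_bool (closer (Suc m) (c # v0) (y0 # v0) (y # w) \<noteq> closer (Suc m) (c # v0) (y0 # v0) (c # \<sigma> y w))
      = (if y = y0 \<and> w = v0 then 2 else 0 :: nat)" if "y \<in> L" "w \<in> W m" for y w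
    using that \<sigma>_in_W[of y w m] by (cases "y = y0 \<and> w = v0") auto
  then have "crossings (Suc m) (c # v0) (y0 # v0) = (\<Sum>y\<in>L. \<Sum>w\<in>W m. if y = y0 \<and> w = v0 then 2 else 0)"
    unfolding crossings_Suc by (intro sum.cong refl) auto
  also have "\<dots> = (\<Sum>y\<in>L. if y = y0 then 2 else 0)"
    by (intro sum.cong refl) (use v0 finite_W in auto)
  also have "\<dots> = 2"
    using y0 finite_L by simp
  finally show ?thesis .
qed

lemma crossings_centre_leaf_edge:
  assumes y0: "y0 \<in> L" and v0: "v0 \<in> W m" and u: "{u, u2} = {v0, \<sigma> y0 v0}" and ne: "u \<noteq> u2"
    and IH: "crossings m u u2 = 2"
  shows "crossings (Suc m) (c # u) (y0 # v0) = 2"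
proof -
  let ?P = "closer (Suc m) (c # u) (y0 # v0)" and ?Q = "closer m u u2"
  have uW: "u \<in> W m" "u2 \<in> W m"
    using doubleton_in_W[OF y0 v0 u] by auto
  note centre = closer_centre_edge[OF y0 v0 u ne] and leaf = closer_leaf_edge[OF y0 v0 u ne]
  have "?Q u" "\<not> ?Q u2"
    using D_pos[OF uW(2,1)] ne by (auto simp: closer_def)
  with centre[OF uW(1)] centre[OF uW(2)] have "?P (c # u)" "\<not> ?P (c # u2)"
    by auto
  then have special: "?P (c # v0) \<noteq> ?P (c # \<sigma> y0 v0)" "\<not> ?P (y0 # v0)"
    using u by (auto simp: doubleton_eq_iff closer_def)
  have split: "of_bool (?P (c # w) \<noteq> ?P (y # w)) + of_bool (?P (y # w) \<noteq> ?P (c # \<sigma> y w)) =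
      (of_bool (?Q w \<noteq> ?Q (\<sigma> y w)) :: nat)" if "y \<in> L" "w \<in> W m" for y w
  proof (cases "y # w = y0 # v0")
    case True
    with special centre[OF that(2)] centre[OF \<sigma>_in_W[OF _ that(2)]] that show ?thesis
      by auto
  next
    case False
    with leaf[OF that] centre[OF that(2)] centre[OF \<sigma>_in_W[OF _ that(2)]] that show ?thesis
      by auto
  qed
  have "crossings (Suc m) (c # u) (y0 # v0) = (\<Sum>y\<in>L. \<Sum>w\<in>W m. of_bool (?Q w \<noteq> ?Q (\<sigma> y w)))"
    unfolding crossings_Suc by (intro sum.cong refl split)
  also have "\<dots> = 2"
    using IH unfolding crossings_def .
  finally show ?thesis .
qed

lemma crossings_adj: "(u, u') \<in> R m \<Longrightarrow> u \<noteq> u' \<Longrightarrow> crossings m u u' = 2"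
proof (induction m arbitrary: u u')
  case 0
  then show ?case
    by (auto dest: adj_in_W simp: words_0)
next
  case (Suc m)
  have centre_leaf: "crossings (Suc m) (c # x) (y # w) = 2"
    if y: "y \<in> L" and w: "w \<in> W m" and x: "x = w \<or> x = \<sigma> y w" for x y w
  proof (cases "\<sigma> y w = w")
    case True
    with x crossings_centre_leaf_loop[OF y w] show ?thesis
      by auto
  next
    case False
    define x2 where "x2 = (if x = w then \<sigma> y w else w)"
    have "{x, x2} = {w, \<sigma> y w}" "x \<noteq> x2"
      using x False unfolding x2_def by auto
    moreover have "(x, x2) \<in> R m"
      using x adj_\<sigma>[OF y w] adj_\<sigma>'[OF y w] unfolding x2_def by auto
    ultimately show ?thesis
      using crossings_centre_leaf_edge[OF y w] Suc.IH by blast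
  qed
  from Suc.prems obtain y w where "y \<in> L" "w \<in> W m"
    "(u, u') \<in> {(c # w, y # w), (y # w, c # w), (y # w, c # \<sigma> y w), (c # \<sigma> y w, y # w)}"
    by (rule adj_SucE)
  with centre_leaf crossings_commute[OF Suc.prems] show ?case
    by auto
qed

lemma crossings_\<sigma>:
  assumes "y \<in> L" "w \<in> W m"
  shows "crossings m w (\<sigma> y w) = 2 * of_bool (\<sigma> y w \<noteq> w)"
proof (cases "\<sigma> y w = w")
  case True
  then show ?thesis
    unfolding crossings_def closer_def by simp
next
  case False
  then show ?thesis
    using crossings_adj[OF adj_\<sigma>[OF assms]] by simp
qed

section \<open>The sum of all distances\<close>

lemma D_\<sigma>_eq_1:
  assumes "y \<in> L" "w \<in> W m" "\<sigma> y w \<noteq> w"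
  shows "D m w (\<sigma> y w) = 1"
proof -
  have "(w, \<sigma> y w) \<in> (R m) ^^ 1"
    using adj_\<sigma>[OF assms(1,2)] by simp
  then have "D m w (\<sigma> y w) \<le> 1"
    by (rule D_le)
  moreover have "0 < D m w (\<sigma> y w)"
    using D_pos[OF assms(2) _ assms(3)[symmetric]] assms(1,2) by (simp add: \<sigma>_in_W)
  ultimately show ?thesis
    by simp
qed

lemma D_\<sigma>':
  "y \<in> L \<Longrightarrow> w \<in> W m \<Longrightarrow> \<sigma> y w \<noteq> w \<Longrightarrow> v \<in> W m \<Longrightarrow>
    D m v (\<sigma> y w) = Suc (D m v w) \<or> D m v w = Suc (D m v (\<sigma> y w))"
  using D_\<sigma> D_commute by metis

lemma D_leaf_leaf_eq:
  assumes y: "y \<in> L" and w: "w \<in> W m" and y': "y' \<in> L" and w': "w' \<in> W m"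
  shows "2 * int (D (Suc m) (y # w) (y' # w')) =
    4 + int (D m w w') + int (D m w (\<sigma> y' w')) + int (D m (\<sigma> y w) w') + int (D m (\<sigma> y w) (\<sigma> y' w'))
    - 2 * of_bool (\<sigma> y w \<noteq> w) - 2 * of_bool (\<sigma> y' w' \<noteq> w')
    + 2 * of_bool (closer m w (\<sigma> y w) w' \<noteq> closer m w (\<sigma> y w) (\<sigma> y' w'))
    - 4 * of_bool (y = y' \<and> w = w')"
proof (cases "y = y' \<and> w = w'")
  case True
  then show ?thesis
    using D_\<sigma>_eq_1[OF y w] D_commute[of m w "\<sigma> y w"] by (cases "\<sigma> y w = w") (auto simp: closer_def)
next
  case False
  have \<sigma>w: "\<sigma> y w \<in> W m" and \<sigma>w': "\<sigma> y' w' \<in> W m"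
    using y w y' w' by (simp_all add: \<sigma>_in_W)
  have "4 * int (min (min (D m w w') (D m w (\<sigma> y' w'))) (min (D m (\<sigma> y w) w') (D m (\<sigma> y w) (\<sigma> y' w'))))
    = int (D m w w') + int (D m w (\<sigma> y' w')) + int (D m (\<sigma> y w) w') + int (D m (\<sigma> y w) (\<sigma> y' w'))
      - 2 * of_bool (\<sigma> y w \<noteq> w) - 2 * of_bool (\<sigma> y' w' \<noteq> w')
      + 2 * of_bool (closer m w (\<sigma> y w) w' \<noteq> closer m w (\<sigma> y w) (\<sigma> y' w'))"
    unfolding closer_def
    using D_\<sigma>[OF y w _ w'] D_\<sigma>[OF y w _ \<sigma>w'] D_\<sigma>'[OF y' w' _ w] D_\<sigma>'[OF y' w' _ \<sigma>w]
    by (intro four_min_eq) (blast | simp)+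
  with D_leaf_leaf[OF y w y' w'] False show ?thesis
    by simp
qed

definition dist_sum :: "nat \<Rightarrow> int" where
  "dist_sum m = (\<Sum>u\<in>W m. \<Sum>v\<in>W m. int (D m u v))"

definition loop_count :: "nat \<Rightarrow> int" where
  "loop_count m = (\<Sum>y\<in>L. \<Sum>w\<in>W m. of_bool (\<sigma> y w = w))"

lemma sum_not_loop:
  "(\<Sum>y\<in>L. \<Sum>w\<in>W m. of_bool (\<sigma> y w \<noteq> w)) = int (card L) * int (card (W m)) - loop_count m"
  unfolding loop_count_def by (simp add: of_bool_not_iff sum_subtractf)

lemma sum_row_\<sigma>:
  "y \<in> L \<Longrightarrow> (\<Sum>w\<in>W m. \<Sum>v\<in>W m. int (D m (\<sigma> y w) v)) = dist_sum m"
  unfolding dist_sum_def by (rule sum_\<sigma>_reindex) simp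

lemma sum_centre_centre: "(\<Sum>w\<in>W m. \<Sum>v\<in>W m. int (D (Suc m) (c # w) (c # v))) = 2 * dist_sum m"
  unfolding dist_sum_def by (simp add: D_centre_centre sum_distrib_left)

lemma sum_leaf_centre:
  "(\<Sum>y\<in>L. \<Sum>w\<in>W m. \<Sum>v\<in>W m. int (D (Suc m) (y # w) (c # v))) =
    2 * int (card L) * dist_sum m + int (card (W m)) * loop_count m"
proof -
  have "(\<Sum>w\<in>W m. \<Sum>v\<in>W m. int (D (Suc m) (y # w) (c # v))) =
      2 * dist_sum m + int (card (W m)) * (\<Sum>w\<in>W m. of_bool (\<sigma> y w = w))" if y: "y \<in> L" for y
    using sum_row_\<sigma>[OF y]
    by (simp add: D_leaf_centre_eq[OF y] sum.distrib sum_distrib_left dist_sum_def)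
  then show ?thesis
    unfolding loop_count_def by (simp add: sum.distrib sum_distrib_left)
qed

lemma sum_centre_leaf:
  "(\<Sum>w\<in>W m. \<Sum>y\<in>L. \<Sum>v\<in>W m. int (D (Suc m) (c # w) (y # v))) =
    2 * int (card L) * dist_sum m + int (card (W m)) * loop_count m"
proof -
  have "(\<Sum>w\<in>W m. \<Sum>y\<in>L. \<Sum>v\<in>W m. int (D (Suc m) (c # w) (y # v))) =
      (\<Sum>w\<in>W m. \<Sum>y\<in>L. \<Sum>v\<in>W m. int (D (Suc m) (y # v) (c # w)))"
    by (intro sum.cong refl arg_cong[where f = int] D_commute)
  also have "\<dots> = (\<Sum>y\<in>L. \<Sum>w\<in>W m. \<Sum>v\<in>W m. int (D (Suc m) (y # v) (c # w)))"
    by (rule sum.swap)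
  also have "\<dots> = (\<Sum>y\<in>L. \<Sum>v\<in>W m. \<Sum>w\<in>W m. int (D (Suc m) (y # v) (c # w)))"
    by (rule sum.cong[OF refl], rule sum.swap)
  also have "\<dots> = 2 * int (card L) * dist_sum m + int (card (W m)) * loop_count m"
    by (rule sum_leaf_centre)
  finally show ?thesis .
qed

lemma sum_leaf_leaf_row:
  assumes y: "y \<in> L" and w: "w \<in> W m"
  shows "(\<Sum>y'\<in>L. \<Sum>w'\<in>W m. 2 * int (D (Suc m) (y # w) (y' # w'))) =
    4 * int (card L) * int (card (W m))
    + 2 * int (card L) * ((\<Sum>v\<in>W m. int (D m w v)) + (\<Sum>v\<in>W m. int (D m (\<sigma> y w) v)))
    - 2 * int (card L) * int (card (W m)) * of_bool (\<sigma> y w \<noteq> w)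
    - 2 * (int (card L) * int (card (W m)) - loop_count m) + 4 * of_bool (\<sigma> y w \<noteq> w) - 4"
proof -
  let ?cross = "\<lambda>y' w'. of_bool (closer m w (\<sigma> y w) w' \<noteq> closer m w (\<sigma> y w) (\<sigma> y' w')) :: int"
  have \<sigma>_row: "(\<Sum>y'\<in>L. \<Sum>w'\<in>W m. int (D m x (\<sigma> y' w'))) = int (card L) * (\<Sum>v\<in>W m. int (D m x v))"
    for x
    by (simp add: sum_\<sigma>_reindex[where f = "\<lambda>v. int (D m x v)"])
  have "(\<Sum>y'\<in>L. \<Sum>w'\<in>W m. ?cross y' w') = int (crossings m w (\<sigma> y w))"
    unfolding crossings_def by (simp add: of_nat_sum)
  also have "\<dots> = 2 * of_bool (\<sigma> y w \<noteq> w)"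
    using crossings_\<sigma>[OF y w] by simp
  finally have cross: "(\<Sum>y'\<in>L. \<Sum>w'\<in>W m. ?cross y' w') = 2 * of_bool (\<sigma> y w \<noteq> w)" .
  have ones: "(\<Sum>w'\<in>W m. of_bool (w = w') :: int) = 1" "(\<Sum>y'\<in>L. of_bool (y = y') :: int) = 1"
    using y w finite_L finite_W by (simp_all add: of_bool_def sum.delta)
  have delta: "(\<Sum>y'\<in>L. \<Sum>w'\<in>W m. of_bool (y = y' \<and> w = w') :: int) = 1"
    unfolding of_bool_conj sum_distrib_left[symmetric] ones(1) using ones(2) by simp
  have "(\<Sum>y'\<in>L. \<Sum>w'\<in>W m. 2 * int (D (Suc m) (y # w) (y' # w'))) =
    (\<Sum>y'\<in>L. \<Sum>w'\<in>W m. 4 + int (D m w w') + int (D m w (\<sigma> y' w')) + int (D m (\<sigma> y w) w')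
      + int (D m (\<sigma> y w) (\<sigma> y' w')) - 2 * of_bool (\<sigma> y w \<noteq> w) - 2 * of_bool (\<sigma> y' w' \<noteq> w')
      + 2 * ?cross y' w' - 4 * of_bool (y = y' \<and> w = w'))"
    using y w by (intro sum.cong refl D_leaf_leaf_eq) auto
  also have "\<dots> = 4 * int (card L) * int (card (W m))
    + 2 * int (card L) * ((\<Sum>v\<in>W m. int (D m w v)) + (\<Sum>v\<in>W m. int (D m (\<sigma> y w) v)))
    - 2 * int (card L) * int (card (W m)) * of_bool (\<sigma> y w \<noteq> w)
    - 2 * (int (card L) * int (card (W m)) - loop_count m) + 4 * of_bool (\<sigma> y w \<noteq> w) - 4"
    unfolding sum.distrib sum_subtractf sum_distrib_left[symmetric] \<sigma>_row cross delta sum_not_loop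
    by (simp add: algebra_simps)
  finally show ?thesis .
qed

lemma sum_leaf_leaf:
  "(\<Sum>y\<in>L. \<Sum>w\<in>W m. \<Sum>y'\<in>L. \<Sum>w'\<in>W m. int (D (Suc m) (y # w) (y' # w'))) =
    2 * int (card L)^2 * dist_sum m + 2 * loop_count m * (int (card L) * int (card (W m)) - 1)"
proof -
  have row: "(\<Sum>y\<in>L. \<Sum>w\<in>W m. \<Sum>v\<in>W m. int (D m w v)) = int (card L) * dist_sum m"
    unfolding dist_sum_def by simp
  have row_\<sigma>: "(\<Sum>y\<in>L. \<Sum>w\<in>W m. \<Sum>v\<in>W m. int (D m (\<sigma> y w) v)) = int (card L) * dist_sum m"
    by (simp add: sum_row_\<sigma>)
  have "2 * (\<Sum>y\<in>L. \<Sum>w\<in>W m. \<Sum>y'\<in>L. \<Sum>w'\<in>W m. int (D (Suc m) (y # w) (y' # w'))) =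
      (\<Sum>y\<in>L. \<Sum>w\<in>W m. \<Sum>y'\<in>L. \<Sum>w'\<in>W m. 2 * int (D (Suc m) (y # w) (y' # w')))"
    by (simp add: sum_distrib_left)
  also have "\<dots> = (\<Sum>y\<in>L. \<Sum>w\<in>W m. 4 * int (card L) * int (card (W m))
      + 2 * int (card L) * (\<Sum>v\<in>W m. int (D m w v)) + 2 * int (card L) * (\<Sum>v\<in>W m. int (D m (\<sigma> y w) v))
      + (4 - 2 * int (card L) * int (card (W m))) * of_bool (\<sigma> y w \<noteq> w)
      - 2 * (int (card L) * int (card (W m)) - loop_count m) - 4)"
    by (intro sum.cong refl) (simp add: sum_leaf_leaf_row algebra_simps)
  also have "\<dots> = 2 * (2 * int (card L)^2 * dist_sum m
      + 2 * loop_count m * (int (card L) * int (card (W m)) - 1))"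
    unfolding sum.distrib sum_subtractf sum_distrib_left[symmetric] row row_\<sigma> sum_not_loop
    by (simp add: algebra_simps power2_eq_square)
  finally show ?thesis
    by simp
qed

lemma dist_sum_Suc:
  "dist_sum (Suc m) =
    2 * int (card V)^2 * dist_sum m + 2 * loop_count m * (int (card V) * int (card (W m)) - 1)"
proof -
  have "dist_sum (Suc m) =
      (\<Sum>w\<in>W m. \<Sum>v\<in>W m. int (D (Suc m) (c # w) (c # v)))
      + (\<Sum>w\<in>W m. \<Sum>y\<in>L. \<Sum>v\<in>W m. int (D (Suc m) (c # w) (y # v)))
      + (\<Sum>y\<in>L. \<Sum>w\<in>W m. \<Sum>v\<in>W m. int (D (Suc m) (y # w) (c # v)))
      + (\<Sum>y\<in>L. \<Sum>w\<in>W m. \<Sum>y'\<in>L. \<Sum>w'\<in>W m. int (D (Suc m) (y # w) (y' # w')))"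
    unfolding dist_sum_def sum_W_Suc by (simp add: sum.distrib)
  moreover have "card V = Suc (card L)"
    using finite_V centre by (rule card.remove)
  ultimately show ?thesis
    using sum_centre_centre sum_centre_leaf sum_leaf_centre sum_leaf_leaf
    by (simp add: algebra_simps power2_eq_square)
qed

lemma card_V: "card V = Suc (card L)"
  using finite_V centre by (rule card.remove)

lemma loop_count_0: "loop_count 0 = int (card L)"
  unfolding loop_count_def by (simp add: words_0)

lemma loop_count_Suc: "loop_count (Suc m) = int (card L) * (int (card L) - 1) * int (card (W m))"
proof -
  have "(\<Sum>z\<in>W (Suc m). of_bool (\<sigma> y z = z) :: int) = (int (card L) - 1) * int (card (W m))"
    if y: "y \<in> L" for y
  proof -
    have "(\<Sum>a\<in>L. \<Sum>w\<in>W m. of_bool (\<sigma> y (a # w) = a # w) :: int) =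
        (\<Sum>a\<in>L. int (card (W m)) - of_bool (a = y) * int (card (W m)))"
      using y by (intro sum.cong refl) (auto simp: of_bool_def)
    also have "\<dots> = (int (card L) - 1) * int (card (W m))"
      using y finite_L by (simp add: sum_subtractf sum_distrib_right[symmetric] algebra_simps)
    finally have "(\<Sum>a\<in>L. \<Sum>w\<in>W m. of_bool (\<sigma> y (a # w) = a # w) :: int) =
        (int (card L) - 1) * int (card (W m))" .
    moreover have "(\<Sum>w\<in>W m. of_bool (\<sigma> y (c # w) = c # w) :: int) = 0"
      using y by simp
    ultimately show ?thesis
      unfolding sum_W_Suc by simp
  qed
  then show ?thesis
    unfolding loop_count_def by simp
qed

lemma dist_sum_eq_star_wiener:
  "real_of_int (dist_sum (Suc j)) = 2 * star_wiener (real (card V)) (Suc j)"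
proof (induction j)
  case 0
  have "dist_sum 1 = 2 * int (card L)^2"
    using dist_sum_Suc[of 0] loop_count_0 card_V by (simp add: dist_sum_def words_0 power2_eq_square)
  then show ?case
    using star_wiener_recurrence(1)[of "real (card V)"] card_V by simp
next
  case (Suc j)
  define K where "K = real (card V)"
  have L: "real (card L) = K - 1" and W: "real (card (W i)) = K ^ i" for i
    unfolding K_def using card_V card_words[OF finite_V] by simp_all
  have "real_of_int (dist_sum (Suc (Suc j))) =
      2 * K^2 * real_of_int (dist_sum (Suc j)) + 2 * (K - 1) * (K - 2) * K^j * (K * K^Suc j - 1)"
    unfolding dist_sum_Suc[of "Suc j"] loop_count_Suc using L W by (simp add: K_def[symmetric])
  also have "\<dots> = 2 * star_wiener K (Suc (Suc j))"
  proof -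
    have K: "K \<ge> 1"
      using L by simp
    have pow: "K^(2 * Suc j) = K^j * (K * K^Suc j)"
      by (simp add: power_add[symmetric] mult_2)
    show ?thesis
      unfolding Suc.IH[folded K_def] star_wiener_recurrence(2)[OF K] pow by (simp add: algebra_simps)
  qed
  finally show ?case
    unfolding K_def .
qed

end

lemma star_schreier_if_oriented_star:
  assumes "finite V" "oriented_star V E"
  obtains c where "star_schreier V E c"
proof -
  obtain c where c: "c \<in> V" and bij: "bij_betw (\<lambda>(s, t). {s, t}) E (star_edges V c)"
    using assms(2) unfolding oriented_star_def by blast
  have "star_schreier V E c"
  proof
    fix e
    assume e: "e \<in> E"
    obtain s t where st: "e = (s, t)"
      by (cases e)
    have "{s, t} \<in> star_edges V c"
      using bij_betwE[OF bij] e st by fastforce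
    then obtain x where "x \<in> V - {c}" "{s, t} = {c, x}"
      unfolding star_edges_def by blast
    then show "\<exists>y \<in> V - {c}. e = (c, y) \<or> e = (y, c)"
      using st by (auto simp: doubleton_eq_iff)
  next
    fix y
    assume "y \<in> V - {c}"
    then have "{c, y} \<in> (\<lambda>(s, t). {s, t}) ` E"
      using bij unfolding bij_betw_def star_edges_def by blast
    then obtain s t where "(s, t) \<in> E" "{s, t} = {c, y}"
      by auto
    then show "(c, y) \<in> E \<or> (y, c) \<in> E"
      by (auto simp: doubleton_eq_iff)
  qed (use assms(1) c in auto)
  then show thesis ..
qed

theorem corollary5p9:
  fixes V :: "'a set" and E :: "('a \<times> 'a) set" and k n :: nat
  assumes "finite V" and "card V = k" and "k \<ge> 1"
    and "oriented_star V E" and "n \<ge> 1"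
  shows "schreier_connected V E n \<and>
         schreier_wiener V E n =
           ((real k - 1)^2 * (2 * (real k)^2 - 2 * real k - 1) / ((real k)^3 * (2 * real k - 1)))
              * 2^n * (real k)^(2*n)
           - ((real k - 1) * (real k - 2) / (real k)^2) * (real k)^(2*n)
           + ((real k - 1) * (real k - 2) / ((real k)^2 * (2 * real k - 1))) * (real k)^n"
proof -
  obtain c where "star_schreier V E c"
    using star_schreier_if_oriented_star assms(1,4) by blast
  then interpret star_schreier V E c .
  obtain j where j: "n = Suc j"
    using assms(5) by (cases n) auto
  have "schreier_connected V E n"
    unfolding schreier_connected_def using adj_connected by blast
  moreover have "schreier_wiener V E n = real_of_int (dist_sum n) / 2"
    unfolding schreier_wiener_def dist_sum_def by (simp add: of_int_sum)
  ultimately show ?thesis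
    using dist_sum_eq_star_wiener[of j] j assms(2) unfolding star_wiener_def by simp
qed

end
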